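(* Let $n\ge2$, let $\lambda_1,\dots,\lambda_n\in\mathbb{C}^*$ (not necessarily distinct), and let $1\le s\le n$ be such that $\lambda=(\lambda_1,\dots,\lambda_n)$ has only level $s$ resonances. Suppose there exists a strictly increasing sequence of integers $(p_\nu)_{\nu\ge0}$ with $p_0=1$ such that $\sum_{\nu\ge0}p_\nu^{-1}\log\omega_s(p_{\nu+1})^{-1}<\infty$ (i.e. $\lambda$ satisfies the partial Brjuno condition of order $s$), and that there exist $k\in\mathbb{N}$ and $\alpha\ge1$ such that $p_\nu>k$ implies $\tilde\omega(p_\nu-k)\ge\omega_s(p_\nu)^\alpha$. Then $\lambda$ satisfies the reduced Brjuno condition.
   Context: For $k\in\mathbb{N}^n$, $|k|=k_1+\cdots+k_n$ and $\lambda^k=\lambda_1^{k_1}\cdots\lambda_n^{k_n}$. For $m\ge2$: $\omega_s(m)=\min_{2\le|k|\le m}\min_{1\le j\le n}|\underline\lambda^k-\lambda_j|$, where $k$ ranges over $\mathbb{N}^s$ and $\underline\lambda^k=\lambda_1^{k_1}\cdots\lambda_s^{k_s}$; and $\tilde\omega(m)=\min_{1\le j\le n}\min\{|\lambda^k-\lambda_j| : k\in\mathbb{N}^n,\ 2\le|k|\le m,\ \lambda^k\ne\lambda_j\}$. The reduced Brjuno condition: there is a strictly increasing sequence of integers $(q_\nu)_{\nu\ge0}$ with $q_0=1$ and $\sum_{\nu\ge0}q_\nu^{-1}\log\tilde\omega(q_{\nu+1})^{-1}<\infty$. Only level $s$ resonances: writing $\lambda=(\lambda_1,\dots,\lambda_s,\mu_1,\dots,\mu_r)$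 with $r=n-s$, for every $k\in\mathbb{N}^n$ with $|k|\ge 2$: there is $h\in\{1,\dots,s\}$ with $\lambda^k=\lambda_h$ iff $k\in\tilde K_1$, and there is $j\in\{1,\dots,r\}$ with $\lambda^k=\mu_j$ iff $k\in\tilde K_2$, where $\tilde K_1=\{k: |k|\ge2,\ k_1+\cdots+k_s=1,\ \mu_1^{k_{s+1}}\cdots\mu_r^{k_n}=1\}$ and $\tilde K_2=\{k: |k|\ge 2,\ k_1=\cdots=k_s=0,\ \exists j\text{ with }\mu_1^{k_{s+1}}\cdots\mu_r^{k_n}=\mu_j\}$. *)

theory Defs
  imports Complex_Main
begin

text \<open>Eigenvalues are lam 1, ..., lam n (1-based). Multi-indices in N^m are
functions k :: nat => nat vanishing outside {1..m}.\<close>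

definition multi_idx :: "nat \<Rightarrow> (nat \<Rightarrow> nat) set" where
  "multi_idx m = {k. \<forall>i. i \<notin> {1..m} \<longrightarrow> k i = 0}"

definition mlen :: "nat \<Rightarrow> (nat \<Rightarrow> nat) \<Rightarrow> nat" where
  "mlen m k = (\<Sum>i\<in>{1..m}. k i)"

definition mpow :: "nat \<Rightarrow> (nat \<Rightarrow> complex) \<Rightarrow> (nat \<Rightarrow> nat) \<Rightarrow> complex" where
  "mpow m lam k = (\<Prod>i\<in>{1..m}. lam i ^ k i)"

definition omega_s :: "nat \<Rightarrow> nat \<Rightarrow> (nat \<Rightarrow> complex) \<Rightarrow> nat \<Rightarrow> real" where
  "omega_s n s lam m = Min {cmod (mpow s lam k - lam j) | k j.
      k \<in> multi_idx s \<and> 2 \<le> mlen s k \<and> mlen s k \<le> m \<and> j \<in> {1..n}}"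

definition omega_tilde :: "nat \<Rightarrow> (nat \<Rightarrow> complex) \<Rightarrow> nat \<Rightarrow> real" where
  "omega_tilde n lam m = Min {cmod (mpow n lam k - lam j) | k j.
      k \<in> multi_idx n \<and> 2 \<le> mlen n k \<and> mlen n k \<le> m \<and> j \<in> {1..n}
      \<and> mpow n lam k \<noteq> lam j}"

text \<open>Product over the mu-part: mu_1^{k_{s+1}} ... mu_r^{k_n}, with mu_j = lam_{s+j}.\<close>
definition mu_pow :: "nat \<Rightarrow> nat \<Rightarrow> (nat \<Rightarrow> complex) \<Rightarrow> (nat \<Rightarrow> nat) \<Rightarrow> complex" where
  "mu_pow n s lam k = (\<Prod>i\<in>{s+1..n}. lam i ^ k i)"

definition K1 :: "nat \<Rightarrow> nat \<Rightarrow> (nat \<Rightarrow> complex) \<Rightarrow> (nat \<Rightarrow> nat) set" where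
  "K1 n s lam = {k \<in> multi_idx n. 2 \<le> mlen n k \<and> (\<Sum>i\<in>{1..s}. k i) = 1
      \<and> mu_pow n s lam k = 1}"

definition K2 :: "nat \<Rightarrow> nat \<Rightarrow> (nat \<Rightarrow> complex) \<Rightarrow> (nat \<Rightarrow> nat) set" where
  "K2 n s lam = {k \<in> multi_idx n. 2 \<le> mlen n k \<and> (\<forall>i\<in>{1..s}. k i = 0)
      \<and> (\<exists>j\<in>{s+1..n}. mu_pow n s lam k = lam j)}"

definition only_level_s_resonances :: "nat \<Rightarrow> nat \<Rightarrow> (nat \<Rightarrow> complex) \<Rightarrow> bool" where
  "only_level_s_resonances n s lam \<longleftrightarrow>
     (\<forall>k \<in> multi_idx n. 2 \<le> mlen n k \<longrightarrow>
        ((\<exists>h\<in>{1..s}. mpow n lam k = lam h) \<longleftrightarrow> k \<in> K1 n s lam) \<and>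
        ((\<exists>j\<in>{s+1..n}. mpow n lam k = lam j) \<longleftrightarrow> k \<in> K2 n s lam))"

definition partial_brjuno :: "nat \<Rightarrow> nat \<Rightarrow> (nat \<Rightarrow> complex) \<Rightarrow> (nat \<Rightarrow> nat) \<Rightarrow> bool" where
  "partial_brjuno n s lam p \<longleftrightarrow> strict_mono p \<and> p 0 = 1 \<and>
     summable (\<lambda>\<nu>. ln (1 / omega_s n s lam (p (Suc \<nu>))) / real (p \<nu>))"

definition reduced_brjuno :: "nat \<Rightarrow> (nat \<Rightarrow> complex) \<Rightarrow> bool" where
  "reduced_brjuno n lam \<longleftrightarrow> (\<exists>q :: nat \<Rightarrow> nat. strict_mono q \<and> q 0 = 1 \<and>
     summable (\<lambda>\<nu>. ln (1 / omega_tilde n lam (q (Suc \<nu>))) / real (q \<nu>)))"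

end

theory Submission
  imports Defs
begin

text \<open>For multi-indices supported on the first \<open>s\<close> coordinates the only-level-\<open>s\<close> hypothesis
  excludes resonances, so every small divisor entering \<open>omega_s\<close> also enters \<open>omega_tilde\<close>, and
  \<open>omega_tilde m \<le> omega_s m\<close>. If \<open>omega_s m\<^sub>0 < 1\<close> for some \<open>m\<^sub>0\<close>, take \<open>q \<nu> = p (\<nu> + N) - k\<close>
  for large \<open>N\<close>: the hypothesis \<open>omega_s (p \<nu>) powr \<alpha> \<le> omega_tilde (p \<nu> - k) \<le> 1\<close> together
  with \<open>p \<nu> \<le> 2 (p \<nu> - k)\<close> bounds each term of the reduced Brjuno series by \<open>2 \<alpha>\<close> times a term
  of the partial Brjuno series. Otherwise \<open>omega_s \<ge> 1\<close> throughout, which forces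
  \<open>1 \<le> omega_tilde m \<le> omega_tilde 2\<close>, and \<open>q \<nu> = 2 ^ \<nu>\<close> works.\<close>

lemma finite_multi_idx_mlen_le: "finite {k \<in> multi_idx m. mlen m k \<le> b}"
proof (rule finite_subset)
  show "{k \<in> multi_idx m. mlen m k \<le> b} \<subseteq>
      {k. \<forall>i. (i \<in> {1..m} \<longrightarrow> k i \<in> {..b}) \<and> (i \<notin> {1..m} \<longrightarrow> k i = 0)}"
  proof
    fix k assume k: "k \<in> {k \<in> multi_idx m. mlen m k \<le> b}"
    have "k i \<le> b" if "i \<in> {1..m}" for i
      using k member_le_sum[of i "{1..m}" k] that by (simp add: mlen_def)
    then show "k \<in> {k. \<forall>i. (i \<in> {1..m} \<longrightarrow> k i \<in> {..b}) \<and> (i \<notin> {1..m} \<longrightarrow> k i = 0)}"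
      using k by (simp add: multi_idx_def)
  qed
  show "finite {k. \<forall>i. (i \<in> {1..m} \<longrightarrow> k i \<in> {..b}) \<and> (i \<notin> {1..m} \<longrightarrow> k i = 0)}"
    by (rule finite_set_of_finite_funs) auto
qed

lemma finite_divisor_values:
  "finite {cmod (mpow m lam k - lam j) | k j. k \<in> multi_idx m \<and> mlen m k \<le> b \<and> j \<in> {1..n}}"
proof (rule finite_subset)
  show "{cmod (mpow m lam k - lam j) | k j. k \<in> multi_idx m \<and> mlen m k \<le> b \<and> j \<in> {1..n}}
      \<subseteq> (\<lambda>(k, j). cmod (mpow m lam k - lam j)) ` ({k \<in> multi_idx m. mlen m k \<le> b} \<times> {1..n})"
    by auto
  show "finite ((\<lambda>(k, j). cmod (mpow m lam k - lam j)) ` ({k \<in> multi_idx m. mlen m k \<le> b} \<times> {1..n}))"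
    using finite_multi_idx_mlen_le by simp
qed

lemma multi_idx_mono: "k \<in> multi_idx s \<Longrightarrow> s \<le> n \<Longrightarrow> k \<in> multi_idx n"
  by (auto simp: multi_idx_def)

lemma
  assumes "k \<in> multi_idx s" "s \<le> n"
  shows mlen_multi_idx_extend: "mlen n k = mlen s k"
    and mpow_multi_idx_extend: "mpow n lam k = mpow s lam k"
proof -
  have split: "{1..n} = {1..s} \<union> {s+1..n}" and vanish: "\<And>i. i \<in> {s+1..n} \<Longrightarrow> k i = 0"
    using assms by (auto simp: multi_idx_def)
  show "mlen n k = mlen s k" unfolding mlen_def split
    by (subst sum.union_disjoint) (auto simp: vanish)
  show "mpow n lam k = mpow s lam k" unfolding mpow_def split
    by (subst prod.union_disjoint) (auto simp: vanish)
qed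

definition divisors_s :: "nat \<Rightarrow> nat \<Rightarrow> (nat \<Rightarrow> complex) \<Rightarrow> nat \<Rightarrow> real set" where
  "divisors_s n s lam m = {cmod (mpow s lam k - lam j) | k j.
      k \<in> multi_idx s \<and> 2 \<le> mlen s k \<and> mlen s k \<le> m \<and> j \<in> {1..n}}"

definition divisors_tilde :: "nat \<Rightarrow> (nat \<Rightarrow> complex) \<Rightarrow> nat \<Rightarrow> real set" where
  "divisors_tilde n lam m = {cmod (mpow n lam k - lam j) | k j.
      k \<in> multi_idx n \<and> 2 \<le> mlen n k \<and> mlen n k \<le> m \<and> j \<in> {1..n}
      \<and> mpow n lam k \<noteq> lam j}"

lemma omega_s_eq_Min: "omega_s n s lam m = Min (divisors_s n s lam m)"
  by (simp add: omega_s_def divisors_s_def)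

lemma omega_tilde_eq_Min: "omega_tilde n lam m = Min (divisors_tilde n lam m)"
  by (simp add: omega_tilde_def divisors_tilde_def)

lemma finite_divisors_s: "finite (divisors_s n s lam m)"
  by (rule finite_subset[OF _ finite_divisor_values]) (auto simp: divisors_s_def)

lemma finite_divisors_tilde: "finite (divisors_tilde n lam m)"
  by (rule finite_subset[OF _ finite_divisor_values]) (auto simp: divisors_tilde_def)

lemma divisors_s_mono:
  assumes "m \<le> m'"
  shows "divisors_s n s lam m \<subseteq> divisors_s n s lam m'"
proof
  fix x assume "x \<in> divisors_s n s lam m"
  then obtain k j where "x = cmod (mpow s lam k - lam j)" "k \<in> multi_idx s" "2 \<le> mlen s k"
      "mlen s k \<le> m" "j \<in> {1..n}"
    unfolding divisors_s_def by blast
  moreover have "mlen s k \<le> m'" using calculation(4) assms by linarith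
  ultimately show "x \<in> divisors_s n s lam m'" unfolding divisors_s_def by blast
qed

lemma divisors_tilde_mono:
  assumes "m \<le> m'"
  shows "divisors_tilde n lam m \<subseteq> divisors_tilde n lam m'"
proof
  fix x assume "x \<in> divisors_tilde n lam m"
  then obtain k j where "x = cmod (mpow n lam k - lam j)" "k \<in> multi_idx n" "2 \<le> mlen n k"
      "mlen n k \<le> m" "j \<in> {1..n}" "mpow n lam k \<noteq> lam j"
    unfolding divisors_tilde_def by blast
  moreover have "mlen n k \<le> m'" using calculation(4) assms by linarith
  ultimately show "x \<in> divisors_tilde n lam m'" unfolding divisors_tilde_def by blast
qed

lemma divisors_tilde_pos: "x \<in> divisors_tilde n lam m \<Longrightarrow> 0 < x"
  unfolding divisors_tilde_def by auto

lemma divisors_s_nonempty: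
  assumes "1 \<le> s" "1 \<le> n" "2 \<le> m"
  shows "divisors_s n s lam m \<noteq> {}"
proof -
  define k where "k = (\<lambda>i::nat. if i = 1 then 2 else 0 :: nat)"
  have "k \<in> multi_idx s" "mlen s k = 2"
    using assms(1) by (auto simp: k_def multi_idx_def mlen_def sum.delta)
  then have "cmod (mpow s lam k - lam 1) \<in> divisors_s n s lam m"
    using assms unfolding divisors_s_def by (intro CollectI exI[of _ k] exI[of _ 1]) auto
  then show ?thesis by blast
qed

text \<open>A monomial in the first \<open>s\<close> eigenvalues lies neither in \<open>K1\<close> (its first \<open>s\<close> exponents
  add up to at least 2) nor in \<open>K2\<close> (they do not all vanish), hence is non-resonant.\<close>
lemma only_level_s_resonances_nonresonant:
  assumes "only_level_s_resonances n s lam" "s \<le> n"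
    and "k \<in> multi_idx s" "2 \<le> mlen s k" "j \<in> {1..n}"
  shows "mpow s lam k \<noteq> lam j"
proof
  assume "mpow s lam k = lam j"
  have k: "k \<in> multi_idx n" "2 \<le> mlen n k"
    using assms(2-4) multi_idx_mono mlen_multi_idx_extend[OF assms(3,2)] by simp_all
  have resonant: "mpow n lam k = lam j"
    using \<open>mpow s lam k = lam j\<close> mpow_multi_idx_extend[OF assms(3,2)] by simp
  note levels = assms(1)[unfolded only_level_s_resonances_def, rule_format, OF k]
  have "k \<in> K1 n s lam \<or> k \<in> K2 n s lam"
  proof (cases "j \<le> s")
    case True
    then have "\<exists>h\<in>{1..s}. mpow n lam k = lam h" using assms(5) resonant by auto
    then show ?thesis using levels by blast
  next
    case False
    then have "\<exists>h\<in>{s+1..n}. mpow n lam k = lam h" using assms(5) resonant by auto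
    then show ?thesis using levels by blast
  qed
  moreover have "k \<notin> K1 n s lam" "k \<notin> K2 n s lam"
    using assms(4) by (auto simp: K1_def K2_def mlen_def)
  ultimately show False by blast
qed

lemma divisors_s_subset_divisors_tilde:
  assumes "only_level_s_resonances n s lam" "s \<le> n"
  shows "divisors_s n s lam m \<subseteq> divisors_tilde n lam m"
proof
  fix x assume "x \<in> divisors_s n s lam m"
  then obtain k j where x: "x = cmod (mpow s lam k - lam j)" "k \<in> multi_idx s" "2 \<le> mlen s k"
      "mlen s k \<le> m" "j \<in> {1..n}"
    unfolding divisors_s_def by blast
  have "mpow s lam k \<noteq> lam j" using only_level_s_resonances_nonresonant[OF assms x(2,3,5)] .
  with x assms(2) show "x \<in> divisors_tilde n lam m"
    unfolding divisors_tilde_def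
    using multi_idx_mono mlen_multi_idx_extend[OF x(2) assms(2)] mpow_multi_idx_extend[OF x(2) assms(2)]
    by (intro CollectI exI[of _ k] exI[of _ j]) simp
qed

context
  fixes n s :: nat and lam :: "nat \<Rightarrow> complex"
  assumes level_s: "1 \<le> s" "s \<le> n" "only_level_s_resonances n s lam"
begin

lemma divisors_tilde_nonempty: "2 \<le> m \<Longrightarrow> divisors_tilde n lam m \<noteq> {}"
  using divisors_s_nonempty[of s n m lam] divisors_s_subset_divisors_tilde[of n s lam m] level_s
  by auto

lemma omega_tilde_le_omega_s: "2 \<le> m \<Longrightarrow> omega_tilde n lam m \<le> omega_s n s lam m"
  unfolding omega_tilde_eq_Min omega_s_eq_Min using level_s
  by (intro Min_antimono divisors_s_subset_divisors_tilde divisors_s_nonempty finite_divisors_tilde)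
    auto

lemma omega_tilde_pos: "2 \<le> m \<Longrightarrow> 0 < omega_tilde n lam m"
  unfolding omega_tilde_eq_Min
  by (rule divisors_tilde_pos, rule Min_in[OF finite_divisors_tilde divisors_tilde_nonempty])

lemma omega_s_pos: "2 \<le> m \<Longrightarrow> 0 < omega_s n s lam m"
  using omega_tilde_pos[of m] omega_tilde_le_omega_s[of m] by linarith

lemma omega_s_antimono: "2 \<le> m \<Longrightarrow> m \<le> m' \<Longrightarrow> omega_s n s lam m' \<le> omega_s n s lam m"
  unfolding omega_s_eq_Min using level_s
  by (intro Min_antimono divisors_s_mono divisors_s_nonempty finite_divisors_s) auto

lemma omega_tilde_le_omega_s_of_le:
  "2 \<le> m \<Longrightarrow> m \<le> m' \<Longrightarrow> omega_tilde n lam m' \<le> omega_s n s lam m"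
  by (rule order_trans[OF omega_tilde_le_omega_s omega_s_antimono]) simp_all

lemma omega_tilde_antimono:
  "2 \<le> m \<Longrightarrow> m \<le> m' \<Longrightarrow> omega_tilde n lam m' \<le> omega_tilde n lam m"
  unfolding omega_tilde_eq_Min
  by (intro Min_antimono divisors_tilde_mono divisors_tilde_nonempty finite_divisors_tilde)

end

lemma abs_ln_inverse_div_le:
  fixes x y \<alpha> D P :: real
  assumes "0 < y" "y powr \<alpha> \<le> x" "x \<le> 1" "1 \<le> \<alpha>" "0 < P" "P \<le> 2 * D"
  shows "\<bar>ln (1 / x) / D\<bar> \<le> 2 * \<alpha> * (ln (1 / y) / P)"
proof -
  have y_powr: "0 < y powr \<alpha>" using assms(1) by simp
  then have x: "0 < x" using assms(2) by linarith
  have "\<alpha> * ln y = ln (y powr \<alpha>)" using assms(1) by (simp add: ln_powr)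
  also have "\<dots> \<le> ln x" by (simp only: ln_le_cancel_iff[OF y_powr x] assms(2))
  finally have ln_bound: "ln (1 / x) \<le> \<alpha> * ln (1 / y)"
    using x assms(1) by (simp add: ln_div)
  have ln_nonneg: "0 \<le> ln (1 / x)" using x assms(3) by (simp add: ln_div)
  have "\<bar>ln (1 / x) / D\<bar> = ln (1 / x) / D" using ln_nonneg assms(5,6) by simp
  also have "\<dots> \<le> \<alpha> * ln (1 / y) / D" using ln_bound assms(5,6) by (simp add: divide_right_mono)
  also have "\<dots> \<le> \<alpha> * ln (1 / y) / (P / 2)"
    using ln_bound ln_nonneg assms(5,6) by (intro divide_left_mono) auto
  also have "\<dots> = 2 * \<alpha> * (ln (1 / y) / P)" by simp
  finally show ?thesis .
qed

lemma brjuno_sequence_of_bounded: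
  fixes v :: "nat \<Rightarrow> real"
  assumes "\<And>m. 2 \<le> m \<Longrightarrow> 1 \<le> v m \<and> v m \<le> c"
  shows "\<exists>q. strict_mono q \<and> q 0 = 1 \<and> summable (\<lambda>\<nu>. ln (1 / v (q (Suc \<nu>))) / real (q \<nu>))"
proof (intro exI conjI)
  let ?q = "\<lambda>\<nu>::nat. (2::nat) ^ \<nu>"
  show "strict_mono ?q" by (simp add: strict_mono_def)
  show "?q 0 = 1" by simp
  show "summable (\<lambda>\<nu>. ln (1 / v (?q (Suc \<nu>))) / real (?q \<nu>))"
  proof (rule summable_comparison_test')
    show "summable (\<lambda>\<nu>. ln c * (1 / 2) ^ \<nu>)" by simp
    fix \<nu> :: nat
    have "1 \<le> v (?q (Suc \<nu>)) \<and> v (?q (Suc \<nu>)) \<le> c"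
      using assms[of "?q (Suc \<nu>)"] by simp
    then have "\<bar>ln (1 / v (?q (Suc \<nu>)))\<bar> \<le> ln c" by (simp add: ln_div)
    then show "norm (ln (1 / v (?q (Suc \<nu>))) / real (?q \<nu>)) \<le> ln c * (1 / 2) ^ \<nu>"
      by (simp add: power_one_over divide_right_mono)
  qed
qed

lemma brjuno_sequence_of_comparison:
  fixes w v :: "nat \<Rightarrow> real"
  assumes p: "strict_mono p"
    and summable: "summable (\<lambda>\<nu>. ln (1 / w (p (Suc \<nu>))) / real (p \<nu>))"
    and \<alpha>: "1 \<le> \<alpha>"
    and bounds: "\<And>\<nu>. N \<le> \<nu> \<Longrightarrow> 2 * k + 2 \<le> p \<nu> \<and> 0 < w (p \<nu>)
        \<and> w (p \<nu>) powr \<alpha> \<le> v (p \<nu> - k) \<and> v (p \<nu> - k) \<le> 1"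
  shows "\<exists>q. strict_mono q \<and> q 0 = 1 \<and> summable (\<lambda>\<nu>. ln (1 / v (q (Suc \<nu>))) / real (q \<nu>))"
proof -
  define q where "q \<nu> = (if \<nu> = 0 then 1 else p (\<nu> + N) - k)" for \<nu>
  have "strict_mono q"
    unfolding strict_mono_Suc_iff
  proof
    fix \<nu>
    have "p (\<nu> + N) < p (Suc \<nu> + N)" using p by (simp add: strict_mono_less)
    then show "q \<nu> < q (Suc \<nu>)"
      using bounds[of "\<nu> + N"] bounds[of "Suc \<nu> + N"] by (auto simp: q_def)
  qed
  let ?b = "\<lambda>\<nu>. ln (1 / w (p (Suc \<nu>))) / real (p \<nu>)"
  have term_bound:
    "\<bar>ln (1 / v (q (Suc (Suc \<nu>)))) / real (q (Suc \<nu>))\<bar> \<le> 2 * \<alpha> * ?b (\<nu> + Suc N)" for \<nu>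
  proof -
    let ?P = "p (\<nu> + Suc N)" and ?P' = "p (Suc (\<nu> + Suc N))"
    have "2 * k + 2 \<le> ?P" using bounds[of "\<nu> + Suc N"] by simp
    then have P: "0 < real ?P" "real ?P \<le> 2 * real (?P - k)" by linarith+
    have "\<bar>ln (1 / v (?P' - k)) / real (?P - k)\<bar> \<le> 2 * \<alpha> * (ln (1 / w ?P') / real ?P)"
      by (rule abs_ln_inverse_div_le) (use bounds[of "Suc (\<nu> + Suc N)"] \<alpha> P in auto)
    then show ?thesis by (simp add: q_def)
  qed
  have "summable (\<lambda>\<nu>. 2 * \<alpha> * ?b (\<nu> + Suc N))"
    using summable_iff_shift[THEN iffD2, OF summable] by (rule summable_mult)
  then have "summable (\<lambda>\<nu>. ln (1 / v (q (Suc (Suc \<nu>)))) / real (q (Suc \<nu>)))"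
    by (rule summable_comparison_test') (use term_bound in simp)
  then have "summable (\<lambda>\<nu>. ln (1 / v (q (Suc \<nu>))) / real (q \<nu>))"
    by (rule summable_Suc_iff[THEN iffD1])
  moreover have "q 0 = 1" by (simp add: q_def)
  ultimately show ?thesis using \<open>strict_mono q\<close> by blast
qed

theorem lemma2p2:
  fixes n s :: nat and lam :: "nat \<Rightarrow> complex" and p :: "nat \<Rightarrow> nat"
    and k :: nat and \<alpha> :: real
  assumes "n \<ge> 2"
    and "\<forall>i\<in>{1..n}. lam i \<noteq> 0"
    and "1 \<le> s" and "s \<le> n"
    and "only_level_s_resonances n s lam"
    and "partial_brjuno n s lam p"
    and "\<alpha> \<ge> 1"
    and "\<forall>\<nu>. p \<nu> > k \<and> p \<nu> - k \<ge> 2 \<longrightarrow>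
           omega_tilde n lam (p \<nu> - k) \<ge> omega_s n s lam (p \<nu>) powr \<alpha>"
  shows "reduced_brjuno n lam"
proof -
  note level_s = assms(3-5) and comparison = assms(8)
  have p: "strict_mono p"
    and partial: "summable (\<lambda>\<nu>. ln (1 / omega_s n s lam (p (Suc \<nu>))) / real (p \<nu>))"
    using assms(6) by (auto simp: partial_brjuno_def)
  have p_large: "m \<le> p \<nu>" if "m \<le> \<nu>" for m \<nu>
    using seq_suble[OF p, of \<nu>] that by linarith
  consider (large) "\<forall>m\<ge>2. 1 \<le> omega_s n s lam m"
    | (small) m\<^sub>0 where "2 \<le> m\<^sub>0" "omega_s n s lam m\<^sub>0 < 1"
    using not_le by blast
  then show ?thesis
  proof cases
    case large
    have "1 \<le> omega_tilde n lam m \<and> omega_tilde n lam m \<le> omega_tilde n lam 2" if m: "2 \<le> m" for m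
    proof -
      have P: "m + k + 2 \<le> p (m + k + 2)" by (rule p_large) simp
      then have "1 \<le> omega_s n s lam (p (m + k + 2)) powr \<alpha>"
        using large assms(7) by (intro ge_one_powr_ge_zero) auto
      also have "\<dots> \<le> omega_tilde n lam (p (m + k + 2) - k)" using comparison P by auto
      also have "\<dots> \<le> omega_tilde n lam m" using omega_tilde_antimono[OF level_s] m P by simp
      finally show ?thesis using omega_tilde_antimono[OF level_s, of 2 m] m by simp
    qed
    then show ?thesis unfolding reduced_brjuno_def by (rule brjuno_sequence_of_bounded)
  next
    case small
    show ?thesis unfolding reduced_brjuno_def
    proof (rule brjuno_sequence_of_comparison[OF p partial assms(7), where N = "2 * k + m\<^sub>0 + 2"])
      fix \<nu> assume "2 * k + m\<^sub>0 + 2 \<le> \<nu>"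
      then have P: "2 * k + m\<^sub>0 + 2 \<le> p \<nu>" by (rule p_large)
      then have "0 < omega_s n s lam (p \<nu>)"
          "omega_s n s lam (p \<nu>) powr \<alpha> \<le> omega_tilde n lam (p \<nu> - k)"
          "omega_tilde n lam (p \<nu> - k) \<le> omega_s n s lam m\<^sub>0"
        using omega_s_pos[OF level_s] comparison omega_tilde_le_omega_s_of_le[OF level_s small(1)]
        by simp_all
      with P show "2 * k + 2 \<le> p \<nu> \<and> 0 < omega_s n s lam (p \<nu>)
          \<and> omega_s n s lam (p \<nu>) powr \<alpha> \<le> omega_tilde n lam (p \<nu> - k)
          \<and> omega_tilde n lam (p \<nu> - k) \<le> 1"
        using small(2) by linarith
    qed
  qed
qed

end
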